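(* Let $F$ be a forest and let $X$ be a multiset of vertices of $F$. Then there is at most one linear forest that is a subgraph of $F$ with end-multiset equal to $X$.
   Context: A multiset is a set together with a positive integer multiplicity assigned to each member. A linear forest is a forest in which every component is a path. The end-multiset of a linear forest $H$ is the multiset of ends of the components of $H$, where an end of a component $P$ has multiplicity one if $P$ has at least one edge, and multiplicity two if $P$ has no edges. *)

theory Defs
  imports Main "HOL-Library.Multiset"
begin

definition graph :: "'a set \<Rightarrow> 'a set set \<Rightarrow> bool" where
  "graph V E \<longleftrightarrow> finite V \<and> (\<forall>e\<in>E. e \<subseteq> V \<and> card e = 2)"

definition adj :: "'a set set \<Rightarrow> 'a \<Rightarrow> 'a \<Rightarrow> bool" where
  "adj E u v \<longleftrightarrow> {u, v} \<in> E"

definition is_cycle :: "'a set set \<Rightarrow> 'a list \<Rightarrow> bool" where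
  "is_cycle E vs \<longleftrightarrow> length vs \<ge> 3 \<and> distinct vs
     \<and> (\<forall>i. Suc i < length vs \<longrightarrow> adj E (vs ! i) (vs ! Suc i))
     \<and> adj E (last vs) (hd vs)"

definition forest :: "'a set \<Rightarrow> 'a set set \<Rightarrow> bool" where
  "forest V E \<longleftrightarrow> graph V E \<and> \<not> (\<exists>vs. set vs \<subseteq> V \<and> is_cycle E vs)"

definition subgraph :: "'a set \<Rightarrow> 'a set set \<Rightarrow> 'a set \<Rightarrow> 'a set set \<Rightarrow> bool" where
  "subgraph V' E' V E \<longleftrightarrow> graph V' E' \<and> V' \<subseteq> V \<and> E' \<subseteq> E"

definition component :: "'a set \<Rightarrow> 'a set set \<Rightarrow> 'a \<Rightarrow> 'a set" where
  "component V E v = {w \<in> V. (adj E)\<^sup>*\<^sup>* v w}"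

definition components :: "'a set \<Rightarrow> 'a set set \<Rightarrow> 'a set set" where
  "components V E = component V E ` V"

definition path_of :: "'a set set \<Rightarrow> 'a set \<Rightarrow> 'a list \<Rightarrow> bool" where
  "path_of E C ps \<longleftrightarrow> ps \<noteq> [] \<and> distinct ps \<and> set ps = C
     \<and> {e \<in> E. e \<subseteq> C} = {{ps ! i, ps ! Suc i} | i. Suc i < length ps}"

definition linear_forest :: "'a set \<Rightarrow> 'a set set \<Rightarrow> bool" where
  "linear_forest V E \<longleftrightarrow> forest V E \<and> (\<forall>C\<in>components V E. \<exists>ps. path_of E C ps)"

text \<open>Ends of a path component: its two endpoints; a one-vertex path gives its vertex twice.\<close>
definition comp_ends :: "'a set set \<Rightarrow> 'a set \<Rightarrow> 'a multiset" where
  "comp_ends E C = (let ps = (SOME ps. path_of E C ps) in {#hd ps, last ps#})"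

definition end_mset :: "'a set \<Rightarrow> 'a set set \<Rightarrow> 'a multiset" where
  "end_mset V E = (\<Sum>C\<in>components V E. comp_ends E C)"

end

theory Submission
  imports Defs
begin

text \<open>In a linear forest H every vertex v of H satisfies count X v + deg H v = 2, where X is
  the end-multiset, and every other vertex has count X v = deg H v = 0. Hence two linear
  subforests with the same end-multiset have degrees of equal parity everywhere, so the symmetric
  difference of their edge sets has only even degrees. A nonempty edge set of a forest always has
  a vertex of odd degree, so the edge sets agree, and then so do the
  vertex sets, which are determined by count X v + deg v.\<close>

definition degree :: "'a set set \<Rightarrow> 'a \<Rightarrow> nat" where
  "degree F v = card {e \<in> F. v \<in> e}"

definition path_edges :: "'a list \<Rightarrow> 'a set set" where
  "path_edges ps = {{ps ! i, ps ! Suc i} | i. Suc i < length ps}"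

lemma graph_finite_edges: "graph V E \<Longrightarrow> finite E"
  unfolding graph_def by (meson Pow_iff finite_Pow_iff finite_subset subsetI)

lemma adj_sym: "adj E u v \<longleftrightarrow> adj E v u"
  by (simp add: adj_def insert_commute)

lemma rtranclp_adj_sym: "(adj E)\<^sup>*\<^sup>* u v \<Longrightarrow> (adj E)\<^sup>*\<^sup>* v u"
proof (induction rule: rtranclp_induct)
  case (step y z)
  then show ?case
    by (metis adj_sym converse_rtranclp_into_rtranclp)
qed simp

lemma components_eq_component:
  assumes "C \<in> components V E" "v \<in> C"
  shows "C = component V E v"
proof -
  obtain u where "u \<in> V" "C = component V E u"
    using assms(1) unfolding components_def by auto
  with assms(2) show ?thesis
    unfolding component_def by (auto intro: rtranclp_trans rtranclp_adj_sym)
qed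

lemma path_edges_containing:
  assumes "distinct ps" "k < length ps"
  shows "{e \<in> path_edges ps. ps ! k \<in> e} =
    (if 0 < k then {{ps ! (k - 1), ps ! k}} else {}) \<union>
    (if Suc k < length ps then {{ps ! k, ps ! Suc k}} else {})"
  (is "_ = ?R")
proof (intro set_eqI iffI)
  fix e assume "e \<in> {e \<in> path_edges ps. ps ! k \<in> e}"
  then obtain i where i: "Suc i < length ps" "e = {ps ! i, ps ! Suc i}" "ps ! k \<in> e"
    unfolding path_edges_def by auto
  then have "k = i \<or> k = Suc i"
    using assms by (auto simp: nth_eq_iff_index_eq)
  with i show "e \<in> ?R" by auto
next
  fix e assume "e \<in> ?R"
  then consider "0 < k" "e = {ps ! (k - 1), ps ! Suc (k - 1)}"
    | "Suc k < length ps" "e = {ps ! k, ps ! Suc k}"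
    by (auto split: if_splits)
  then show "e \<in> {e \<in> path_edges ps. ps ! k \<in> e}"
    using assms(2) unfolding path_edges_def by cases fastforce+
qed

lemma degree_path_edges_plus_ends:
  assumes "distinct ps" "v \<in> set ps"
  shows "degree (path_edges ps) v + count {#hd ps, last ps#} v = 2"
proof -
  obtain k where k: "k < length ps" "v = ps ! k"
    using assms(2) by (metis in_set_conv_nth)
  have "ps \<noteq> []"
    using assms(2) by auto
  then have "hd ps = ps ! 0" "last ps = ps ! (length ps - 1)"
    by (simp_all add: hd_conv_nth last_conv_nth)
  moreover have "ps ! 0 = v \<longleftrightarrow> k = 0"
    using k \<open>ps \<noteq> []\<close> nth_eq_iff_index_eq[OF assms(1), of 0 k] by auto
  moreover have "ps ! (length ps - 1) = v \<longleftrightarrow> Suc k = length ps"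
    using k \<open>ps \<noteq> []\<close> nth_eq_iff_index_eq[OF assms(1), of "length ps - 1" k] by auto
  ultimately have ends: "count {#hd ps, last ps#} v = of_bool (k = 0) + of_bool (Suc k = length ps)"
    by simp
  have "ps ! (k - 1) \<noteq> ps ! Suc k" if "0 < k" "Suc k < length ps"
    using assms(1) that by (simp add: nth_eq_iff_index_eq)
  then have "{ps ! (k - 1), ps ! k} \<noteq> {ps ! k, ps ! Suc k}" if "0 < k" "Suc k < length ps"
    using that by (metis doubleton_eq_iff)
  then have "degree (path_edges ps) v = of_bool (0 < k) + of_bool (Suc k < length ps)"
    unfolding degree_def k(2) path_edges_containing[OF assms(1) k(1)] by (auto simp: card_insert_if)
  with ends k(1) show ?thesis by auto
qed

lemma linear_forest_component_path:
  assumes "linear_forest V E" "C \<in> components V E"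
  shows "path_of E C (SOME ps. path_of E C ps)"
  using assms unfolding linear_forest_def by (blast intro: someI_ex)

lemma count_end_mset:
  assumes "linear_forest V E"
  shows "count (end_mset V E) v = (if v \<in> V then count (comp_ends E (component V E v)) v else 0)"
proof -
  have fin: "finite (components V E)"
    using assms by (simp add: linear_forest_def forest_def graph_def components_def)
  have ends_in: "count (comp_ends E C) v = 0" if "C \<in> components V E" "v \<notin> C" for C
    using linear_forest_component_path[OF assms that(1)] that(2)
    unfolding comp_ends_def path_of_def Let_def by auto
  have "count (end_mset V E) v = (\<Sum>C\<in>components V E. count (comp_ends E C) v)"
    unfolding end_mset_def by (simp add: count_sum)
  also have "\<dots> = (if v \<in> V then count (comp_ends E (component V E v)) v else 0)"
  proof (cases "v \<in> V")
    case True
    then have "component V E v \<in> components V E" "v \<in> component V E v"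
      by (simp_all add: components_def component_def)
    moreover have "count (comp_ends E C) v = 0" if "C \<in> components V E - {component V E v}" for C
      using that components_eq_component ends_in by (metis DiffE singletonI)
    ultimately have "(\<Sum>C\<in>components V E. count (comp_ends E C) v)
        = (\<Sum>C\<in>{component V E v}. count (comp_ends E C) v)"
      using fin by (intro sum.mono_neutral_right) simp_all
    with True show ?thesis
      by simp
  next
    case False
    then show ?thesis
      by (auto simp: components_def component_def intro!: sum.neutral ends_in)
  qed
  finally show ?thesis .
qed

lemma card_2_other:
  assumes "card e = 2" "v \<in> e"
  obtains w where "e = {v, w}" "w \<noteq> v"
  using assms by (auto simp: card_2_iff insert_commute)

lemma edge_subset_component:
  assumes "graph V E" "e \<in> E" "v \<in> e"
  shows "e \<subseteq> component V E v"
proof -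
  have "e \<subseteq> V" "card e = 2"
    using assms(1,2) unfolding graph_def by auto
  then obtain w where "e = {v, w}"
    using assms(3) card_2_other by metis
  then have "adj E v w"
    using assms(2) by (simp add: adj_def)
  with \<open>e \<subseteq> V\<close> \<open>e = {v, w}\<close> show ?thesis
    unfolding component_def by auto
qed

lemma linear_forest_ends_plus_degree:
  assumes "linear_forest V E"
  shows "count (end_mset V E) v + degree E v = (if v \<in> V then 2 else 0)"
proof -
  have graph: "graph V E"
    using assms by (simp add: linear_forest_def forest_def)
  show ?thesis
  proof (cases "v \<in> V")
    case False
    then have "{e \<in> E. v \<in> e} = {}"
      using graph unfolding graph_def by auto
    with False show ?thesis
      by (simp only: count_end_mset[OF assms] degree_def) simp
  next
    case True
    define C where "C = component V E v"
    define ps where "ps = (SOME ps. path_of E C ps)"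
    have "C \<in> components V E" "v \<in> C"
      using True by (simp_all add: C_def components_def component_def)
    have path: "path_of E C ps"
      unfolding ps_def by (rule linear_forest_component_path[OF assms \<open>C \<in> components V E\<close>])
    have "{e \<in> E. v \<in> e} = {e \<in> {e \<in> E. e \<subseteq> C}. v \<in> e}"
      using edge_subset_component[OF graph] unfolding C_def by blast
    also have "\<dots> = {e \<in> path_edges ps. v \<in> e}"
      using path by (simp add: path_of_def path_edges_def)
    finally have "degree E v = degree (path_edges ps) v"
      by (simp add: degree_def)
    moreover have "count (end_mset V E) v = count {#hd ps, last ps#} v"
      using True by (simp add: count_end_mset[OF assms] comp_ends_def Let_def C_def ps_def)
    moreover have "distinct ps" "v \<in> set ps"
      using path \<open>v \<in> C\<close> by (simp_all add: path_of_def)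
    ultimately show ?thesis
      using True degree_path_edges_plus_ends by (metis add.commute)
  qed
qed

definition is_path :: "'a set set \<Rightarrow> 'a list \<Rightarrow> bool" where
  "is_path F ps \<longleftrightarrow> distinct ps \<and> (\<forall>i. Suc i < length ps \<longrightarrow> {ps ! i, ps ! Suc i} \<in> F)"

lemma is_path_Cons:
  assumes "is_path F ps" "w \<notin> set ps" "{w, ps ! 0} \<in> F"
  shows "is_path F (w # ps)"
proof -
  have "{(w # ps) ! i, (w # ps) ! Suc i} \<in> F" if "Suc i < length (w # ps)" for i
    using that assms(1,3) by (cases i) (auto simp: is_path_def)
  with assms(1,2) show ?thesis
    by (simp add: is_path_def)
qed

lemma is_cycle_take_closing_edge:
  assumes "is_path E ps" "2 \<le> j" "j < length ps" "{ps ! j, ps ! 0} \<in> E"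
  shows "is_cycle E (take (Suc j) ps)"
proof -
  have "last (take (Suc j) ps) = ps ! j" "hd (take (Suc j) ps) = ps ! 0"
    using assms(2,3) by (simp_all add: take_Suc_conv_app_nth hd_conv_nth nth_append)
  with assms show ?thesis
    unfolding is_cycle_def is_path_def adj_def by auto
qed

lemma ex_longest_distinct_list:
  assumes "finite V" "P xs" "\<And>ys. P ys \<Longrightarrow> distinct ys \<and> set ys \<subseteq> V"
  shows "\<exists>ys. P ys \<and> (\<forall>zs. P zs \<longrightarrow> length zs \<le> length ys)"
proof (rule Lattices_Big.ex_has_greatest_nat[where P = P and f = length, OF assms(2)])
  show "\<forall>ys. P ys \<longrightarrow> length ys < Suc (card V)"
    using assms(1,3) by (metis card_mono distinct_card less_Suc_eq_le)
qed

lemma even_degree_other_edge: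
  assumes "finite F" "e \<in> F" "v \<in> e" "even (degree F v)"
  obtains e' where "e' \<in> F" "v \<in> e'" "e' \<noteq> e"
proof (rule ccontr)
  assume "\<not> thesis"
  with that have "{e' \<in> F. v \<in> e'} = {e}"
    using assms(2,3) by blast
  with assms(4) show False
    by (simp add: degree_def)
qed

text \<open>The first vertex of a longest path in F has a second F-edge by parity; maximality puts
  its other end on the path, which closes a cycle.\<close>

lemma forest_even_degree_edges_empty:
  assumes "forest V E" "F \<subseteq> E" "\<And>v. even (degree F v)"
  shows "F = {}"
proof (rule ccontr)
  assume "F \<noteq> {}"
  have graph: "graph V E" and acyclic: "\<nexists>vs. set vs \<subseteq> V \<and> is_cycle E vs"
    using assms(1) by (simp_all add: forest_def)
  then have "finite F"
    using assms(2) graph_finite_edges finite_subset by blast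
  have F_edge: "e \<subseteq> V \<and> card e = 2" if "e \<in> F" for e
    using that assms(2) graph unfolding graph_def by blast
  define long_path where "long_path ps \<longleftrightarrow> is_path F ps \<and> set ps \<subseteq> V \<and> 2 \<le> length ps" for ps
  obtain e0 where "e0 \<in> F"
    using \<open>F \<noteq> {}\<close> by blast
  then obtain a b where "{a, b} \<in> F" "a \<noteq> b"
    using F_edge[OF \<open>e0 \<in> F\<close>] by (auto simp: card_2_iff)
  then have "long_path [a, b]"
    using F_edge by (auto simp: long_path_def is_path_def less_Suc_eq)
  then obtain ps where ps: "long_path ps" and longest: "\<And>qs. long_path qs \<Longrightarrow> length qs \<le> length ps"
    using ex_longest_distinct_list[of V long_path "[a, b]"] graph
    unfolding graph_def long_path_def is_path_def by blast
  then have "{ps ! 0, ps ! 1} \<in> F"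
    by (auto simp: long_path_def is_path_def)
  then obtain e where e: "e \<in> F" "ps ! 0 \<in> e" "e \<noteq> {ps ! 0, ps ! 1}"
    using even_degree_other_edge[of F "{ps ! 0, ps ! 1}" "ps ! 0"] \<open>finite F\<close> assms(3) by auto
  moreover have "card e = 2" "e \<subseteq> V"
    using F_edge e(1) by auto
  ultimately obtain w where w: "e = {ps ! 0, w}" "w \<noteq> ps ! 0"
    using card_2_other[of e "ps ! 0"] by auto
  with \<open>e \<subseteq> V\<close> have "w \<in> V"
    by blast
  have "w \<in> set ps"
  proof (rule ccontr)
    assume "w \<notin> set ps"
    then have "long_path (w # ps)"
      using ps w e(1) \<open>w \<in> V\<close> is_path_Cons[of F ps w] by (auto simp: long_path_def insert_commute)
    with longest show False
      by fastforce
  qed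
  then obtain j where j: "j < length ps" "w = ps ! j"
    by (metis in_set_conv_nth)
  moreover have "j \<noteq> 0" "j \<noteq> 1"
    using w e(3) j(2) by auto
  moreover have "is_path E ps"
    using ps assms(2) by (auto simp: long_path_def is_path_def)
  ultimately have "is_cycle E (take (Suc j) ps)"
    using e(1) w assms(2) by (intro is_cycle_take_closing_edge) (auto simp: insert_commute)
  moreover have "set (take (Suc j) ps) \<subseteq> V"
    using ps by (meson long_path_def order_trans set_take_subset)
  ultimately show False
    using acyclic by blast
qed

lemma even_degree_sym_diff:
  assumes "finite F1" "finite F2" "even (degree F1 v + degree F2 v)"
  shows "even (degree ((F1 - F2) \<union> (F2 - F1)) v)"
proof -
  define A where "A = {e \<in> F1. v \<in> e}"
  define B where "B = {e \<in> F2. v \<in> e}"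
  have "finite A" "finite B"
    using assms(1,2) by (simp_all add: A_def B_def)
  have "{e \<in> (F1 - F2) \<union> (F2 - F1). v \<in> e} = (A \<union> B) - (A \<inter> B)"
    by (auto simp: A_def B_def)
  moreover have "card (A \<union> B - A \<inter> B) = card (A \<union> B) - card (A \<inter> B)"
    using \<open>finite A\<close> by (intro card_Diff_subset) auto
  ultimately have "degree ((F1 - F2) \<union> (F2 - F1)) v = card (A \<union> B) - card (A \<inter> B)"
    by (simp add: degree_def)
  also have "\<dots> = degree F1 v + degree F2 v - 2 * card (A \<inter> B)"
    using card_Un_Int[OF \<open>finite A\<close> \<open>finite B\<close>] by (simp add: degree_def A_def B_def)
  finally show ?thesis
    using assms(3) by simp
qed

theorem mainTheorem17:
  fixes V :: "'a set" and E :: "'a set set" and X :: "'a multiset"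
  assumes "forest V E"
    and "set_mset X \<subseteq> V"
  shows "\<forall>V1 E1 V2 E2.
           linear_forest V1 E1 \<and> subgraph V1 E1 V E \<and> end_mset V1 E1 = X \<and>
           linear_forest V2 E2 \<and> subgraph V2 E2 V E \<and> end_mset V2 E2 = X
           \<longrightarrow> V1 = V2 \<and> E1 = E2"
proof (intro allI impI, elim conjE)
  fix V1 E1 V2 E2
  assume lin1: "linear_forest V1 E1" and sub1: "subgraph V1 E1 V E" and ends1: "end_mset V1 E1 = X"
    and lin2: "linear_forest V2 E2" and sub2: "subgraph V2 E2 V E" and ends2: "end_mset V2 E2 = X"
  have deg1: "count X v + degree E1 v = (if v \<in> V1 then 2 else 0)" for v
    using linear_forest_ends_plus_degree[OF lin1] ends1 by simp
  have deg2: "count X v + degree E2 v = (if v \<in> V2 then 2 else 0)" for v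
    using linear_forest_ends_plus_degree[OF lin2] ends2 by simp
  have "finite E1" "finite E2"
    using sub1 sub2 graph_finite_edges by (auto simp: subgraph_def)
  moreover have "even (degree E1 v + degree E2 v)" for v
    using deg1[of v] deg2[of v] by (simp split: if_splits; presburger)
  ultimately have "(E1 - E2) \<union> (E2 - E1) = {}"
    using sub1 sub2 by (intro forest_even_degree_edges_empty[OF assms(1)] even_degree_sym_diff)
      (auto simp: subgraph_def)
  then have "E1 = E2"
    by blast
  moreover have "v \<in> V1 \<longleftrightarrow> v \<in> V2" for v
    using deg1[of v] deg2[of v] \<open>E1 = E2\<close> by (auto split: if_splits)
  ultimately show "V1 = V2 \<and> E1 = E2"
    by blast
qed

end
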